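(* Let $n\ge1$, $\nu\ge1$ be integers and $\delta\in\{0,1,2\}$. Then: (1) If $[\vec a]$ is a vertex of $\mathcal{O}^{(2\nu+\delta)}_{2^n}$, then $|\{[\vec b]\in\mathcal{V}(\mathcal{O}^{(2\nu+\delta)}_{2^n}):[\pi(\vec a)]=[\pi(\vec b)]\}|=2^{(n-1)(2\nu+\delta-2)}$. (2) $[\vec a]$ and $[\vec b]$ are adjacent vertices in $\mathcal{O}^{(2\nu+\delta)}_{2^n}$ if and only if $[\pi(\vec a)]$ and $[\pi(\vec b)]$ are adjacent vertices in $\mathcal{O}^{(2\nu+\delta)}_{2}$. (3) If $[\pi(\vec a)]$ and $[\pi(\vec b)]$ are adjacent vertices in $\mathcal{O}^{(2\nu+\delta)}_{2}$, then $[\vec a+\vec m_1]$ and $[\vec b+\vec m_2]$ are adjacent vertices in $\mathcal{O}^{(2\nu+\delta)}_{2^n}$ for all $\vec m_1,\vec m_2\in(2\mathbb{Z}_{2^n})^{2\nu+\delta}$ such that $(\vec a+\vec m_1)G_{2\nu+\delta,\Delta}(\vec a+\vec m_1)^t=(\vec b+\vec m_2)G_{2\nu+\delta,\Delta}(\vec b+\vec m_2)^t=0$.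
   Context: Let $V^{2\nu+\delta}$ be the set of tuples $\vec a=(a_1,\ldots,a_{2\nu+\delta})\in(\mathbb{Z}_{2^n})^{2\nu+\delta}$ such that some $a_i$ is a unit of $\mathbb{Z}_{2^n}$. Write $\vec a\sim\vec b$ if $\vec a=\lambda\vec b$ for some $\lambda\in\mathbb{Z}_{2^n}^\times$, let $[\vec a]$ denote the equivalence class and $V^{2\nu+\delta}_\sim$ the set of classes. Let $G_{2\nu+\delta,\Delta}=\begin{pmatrix}0&I_\nu&\\ &0&\\ &&\Delta\end{pmatrix}$ over $\mathbb{Z}_{2^n}$ (first two block sizes $\nu$, unspecified blocks zero), where $\Delta$ is empty if $\delta=0$, $\Delta=(1)$ if $\delta=1$, and $\Delta=\begin{pmatrix}z&1\\0&z\end{pmatrix}$ if $\delta=2$, with $z$ a fixed unit of $\mathbb{Z}_{2^n}$. The orthogonal graph $\mathcal{O}^{(2\nu+\delta)}_{2^n}$ has vertex set $\mathcal{V}(\mathcal{O}^{(2\nu+\delta)}_{2^n})=\{[\vec a]\in V^{2\nu+\delta}_\sim:\vec a\,G_{2\nu+\delta,\Delta}\,\vec a^t=0\}$, with $[\vec a]$ adjacent to $[\vec b]$ iff $\vec a(G_{2\nu+\delta,\Delta}+G_{2\nu+\delta,\Delta}^t)\vec b^t\in\mathbb{Z}_{2^n}^\times$. $\mathcal{O}^{(2\nu+\delta)}_{2}$ denotes the same construction with $n=1$ (using the reduction of $G_{2\nu+\delta,\Delta}$ mod $2$). $\pi:\mathbb{Z}_{2^n}\to\mathbb{Z}_2$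 is reduction mod $2$, applied componentwise to tuples. *)

theory Defs
  imports Main "HOL-Computational_Algebra.Primes"
begin

text \<open>Elements of Z_q are represented by integers in {0..<q}; tuples of length N
  by functions nat => int that are zero outside the index range {0..<N}.\<close>

definition vecs :: "int \<Rightarrow> nat \<Rightarrow> (nat \<Rightarrow> int) set" where
  "vecs q N = {a. (\<forall>i<N. 0 \<le> a i \<and> a i < q) \<and> (\<forall>i. N \<le> i \<longrightarrow> a i = 0)}"

definition units_mod :: "int \<Rightarrow> int set" where
  "units_mod q = {u. 0 \<le> u \<and> u < q \<and> coprime u q}"

definition Vset :: "int \<Rightarrow> nat \<Rightarrow> (nat \<Rightarrow> int) set" where
  "Vset q N = {a \<in> vecs q N. \<exists>i<N. coprime (a i) q}"

definition smult :: "int \<Rightarrow> int \<Rightarrow> (nat \<Rightarrow> int) \<Rightarrow> (nat \<Rightarrow> int)" where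
  "smult q c a = (\<lambda>i. (c * a i) mod q)"

definition vadd :: "int \<Rightarrow> (nat \<Rightarrow> int) \<Rightarrow> (nat \<Rightarrow> int) \<Rightarrow> (nat \<Rightarrow> int)" where
  "vadd q a b = (\<lambda>i. (a i + b i) mod q)"

definition cls :: "int \<Rightarrow> nat \<Rightarrow> (nat \<Rightarrow> int) \<Rightarrow> (nat \<Rightarrow> int) set" where
  "cls q N a = {b \<in> Vset q N. \<exists>c \<in> units_mod q. a = smult q c b}"

definition pi2 :: "(nat \<Rightarrow> int) \<Rightarrow> (nat \<Rightarrow> int)" where
  "pi2 a = (\<lambda>i. a i mod 2)"

definition evens :: "int \<Rightarrow> nat \<Rightarrow> (nat \<Rightarrow> int) set" where
  "evens q N = {m \<in> vecs q N. \<forall>i<N. even (m i)}"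

text \<open>The matrix G_{2nu+delta,Delta} (integer entries; reduced mod q when used),
  indices 0-based.\<close>
definition Gmat :: "nat \<Rightarrow> nat \<Rightarrow> int \<Rightarrow> nat \<Rightarrow> nat \<Rightarrow> int" where
  "Gmat nu delta z i j =
     (if i < nu \<and> j = nu + i then 1
      else if delta = 1 \<and> i = 2*nu \<and> j = 2*nu then 1
      else if delta = 2 \<and> i = 2*nu \<and> j = 2*nu then z
      else if delta = 2 \<and> i = 2*nu + 1 \<and> j = 2*nu + 1 then z
      else if delta = 2 \<and> i = 2*nu \<and> j = 2*nu + 1 then 1
      else 0)"

definition form :: "int \<Rightarrow> nat \<Rightarrow> (nat \<Rightarrow> nat \<Rightarrow> int) \<Rightarrow> (nat \<Rightarrow> int) \<Rightarrow> (nat \<Rightarrow> int) \<Rightarrow> int" where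
  "form q N M a b = (\<Sum>i<N. \<Sum>j<N. a i * M i j * b j) mod q"

definition verts :: "int \<Rightarrow> nat \<Rightarrow> (nat \<Rightarrow> nat \<Rightarrow> int) \<Rightarrow> (nat \<Rightarrow> int) set set" where
  "verts q N G = {cls q N a | a. a \<in> Vset q N \<and> form q N G a a = 0}"

definition adjacent :: "int \<Rightarrow> nat \<Rightarrow> (nat \<Rightarrow> nat \<Rightarrow> int) \<Rightarrow> (nat \<Rightarrow> int) set \<Rightarrow> (nat \<Rightarrow> int) set \<Rightarrow> bool" where
  "adjacent q N G A B \<longleftrightarrow> A \<in> verts q N G \<and> B \<in> verts q N G \<and>
     (\<exists>a\<in>A. \<exists>b\<in>B. coprime (form q N (\<lambda>i j. G i j + G j i) a b) q)"

end

theory Submission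
  imports Defs "HOL-Number_Theory.Cong" "HOL-Library.FuncSet"
begin

(*
  Evaluate Q(x) = x G x^t and B(x, y) = x (G + G^t) y^t over the integers. The units of
  Z_(2^n) are the odd residues, so [a] and [b] are adjacent exactly when B(a, b) is odd,
  a condition on a and b modulo 2 only; this gives (2) and (3).

  For (1), the form on the block Delta is anisotropic modulo 2, so a vertex has an odd
  coordinate a_j in the hyperbolic part. Scaling by a unit normalises a_j = 1, which selects
  one representative per class. If k is the hyperbolic partner of j, then
  Q(x) = x_k x_j + (terms free of x_k), so once x_j = 1 the condition Q(x) = 0 determines
  x_k modulo 2^n from the other coordinates, while each of the remaining N - 2 coordinates
  is any of the 2^(n-1) lifts of its residue modulo 2.
*)

section \<open>The form as an integer double sum\<close>

definition bilin :: "nat \<Rightarrow> (nat \<Rightarrow> nat \<Rightarrow> int) \<Rightarrow> (nat \<Rightarrow> int) \<Rightarrow> (nat \<Rightarrow> int) \<Rightarrow> int" where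
  "bilin N M a b = (\<Sum>i<N. \<Sum>j<N. a i * M i j * b j)"

lemma form_eq_bilin_mod: "form q N M a b = bilin N M a b mod q"
  by (simp add: form_def bilin_def)

lemma bilin_cong:
  assumes "\<forall>i<N. [x i = x' i] (mod m)" and "\<forall>j<N. [y j = y' j] (mod m)"
  shows "[bilin N M x y = bilin N M x' y'] (mod m)"
  unfolding bilin_def by (intro cong_sum cong_mult cong_refl) (use assms in auto)

lemma bilin_smult: "bilin N M (smult q c x) (smult q d y) mod q = c * d * bilin N M x y mod q"
proof -
  have "[bilin N M (smult q c x) (smult q d y) = bilin N M (\<lambda>i. c * x i) (\<lambda>j. d * y j)] (mod q)"
    by (rule bilin_cong) (auto simp: smult_def cong_def)
  moreover have "bilin N M (\<lambda>i. c * x i) (\<lambda>j. d * y j) = c * d * bilin N M x y"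
    unfolding bilin_def by (simp add: sum_distrib_left algebra_simps)
  ultimately show ?thesis by (simp add: cong_def)
qed

lemma bilin_add_left: "bilin N M (\<lambda>i. x i + x' i) y = bilin N M x y + bilin N M x' y"
  unfolding bilin_def by (simp add: algebra_simps sum.distrib)

lemma bilin_add_right: "bilin N M x (\<lambda>j. y j + y' j) = bilin N M x y + bilin N M x y'"
  unfolding bilin_def by (simp add: algebra_simps sum.distrib)

lemma bilin_unit_left:
  assumes "k < N"
  shows "bilin N M (\<lambda>i. if i = k then t else 0) y = t * (\<Sum>j<N. M k j * y j)"
proof -
  have "bilin N M (\<lambda>i. if i = k then t else 0) y = (\<Sum>i<N. if i = k then t * (\<Sum>j<N. M k j * y j) else 0)"
    unfolding bilin_def by (intro sum.cong) (auto simp: sum_distrib_left mult.assoc)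
  then show ?thesis using assms by simp
qed

lemma bilin_unit_right:
  assumes "k < N"
  shows "bilin N M x (\<lambda>j. if j = k then t else 0) = t * (\<Sum>i<N. x i * M i k)"
proof -
  have "(\<Sum>j<N. x i * M i j * (if j = k then t else 0)) = t * (x i * M i k)" for i
    using assms by (simp add: if_distrib[of "\<lambda>u. x i * M i _ * u"] cong: if_cong)
  then show ?thesis unfolding bilin_def by (simp add: sum_distrib_left)
qed

lemma bilin_update_diag:
  assumes "k < N"
  shows "bilin N M (x(k := t)) (x(k := t)) =
    t * (\<Sum>i<N. (x(k := 0)) i * (M i k + M k i)) + t * t * M k k + bilin N M (x(k := 0)) (x(k := 0))"
proof -
  define y where "y = x(k := 0)"
  define e where "e = (\<lambda>i. if i = k then t else 0 :: int)"
  have "x(k := t) = (\<lambda>i. y i + e i)"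
    by (auto simp: y_def e_def)
  then have "bilin N M (x(k := t)) (x(k := t)) = bilin N M y y + bilin N M y e + bilin N M e y + bilin N M e e"
    by (simp add: bilin_add_left bilin_add_right)
  also have "\<dots> = bilin N M y y + t * (\<Sum>i<N. y i * M i k) + t * (\<Sum>j<N. M k j * y j) + t * t * M k k"
    using assms by (simp add: e_def bilin_unit_left bilin_unit_right if_distrib[of "\<lambda>u. M k _ * u"] cong: if_cong)
  finally show ?thesis
    unfolding y_def[symmetric] by (simp add: algebra_simps sum.distrib sum_distrib_left)
qed

lemma bilin_update_hyperbolic:
  assumes "k < N" and "j < N" and "j \<noteq> k"
    and pair: "\<forall>i<N. M i k + M k i = (if i = j then 1 else 0)"
  shows "bilin N M (x(k := t)) (x(k := t)) = t * x j + bilin N M (x(k := 0)) (x(k := 0))"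
proof -
  have "M k k + M k k = 0" using pair[rule_format, OF \<open>k < N\<close>] \<open>j \<noteq> k\<close> by simp
  then have "M k k = 0" by simp
  moreover have "(\<Sum>i<N. (x(k := 0)) i * (M i k + M k i)) = (\<Sum>i<N. if i = j then x j else 0)"
    using pair \<open>j \<noteq> k\<close> by (intro sum.cong) simp_all
  ultimately show ?thesis
    unfolding bilin_update_diag[OF \<open>k < N\<close>, where t = t] using \<open>j < N\<close> by simp
qed

lemma bilin_zero_mod_iff_hyperbolic_coord:
  assumes "k < N" and "j < N" and "j \<noteq> k"
    and pair: "\<forall>i<N. M i k + M k i = (if i = j then 1 else 0)"
    and "x j = 1" and "0 \<le> x k" and "x k < q"
  shows "bilin N M x x mod q = 0 \<longleftrightarrow> x k = - bilin N M (x(k := 0)) (x(k := 0)) mod q"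
proof -
  have "bilin N M x x = x k + bilin N M (x(k := 0)) (x(k := 0))"
    using bilin_update_hyperbolic[OF \<open>k < N\<close> \<open>j < N\<close> \<open>j \<noteq> k\<close> pair, of x "x k"] \<open>x j = 1\<close> by simp
  then have "bilin N M x x mod q = 0 \<longleftrightarrow> x k mod q = - bilin N M (x(k := 0)) (x(k := 0)) mod q"
    by (simp add: mod_eq_dvd_iff dvd_eq_mod_eq_0)
  moreover have "x k mod q = x k"
    using \<open>0 \<le> x k\<close> \<open>x k < q\<close> by simp
  ultimately show ?thesis
    by simp
qed

lemma odd_bilin_clear_hyperbolic_coord:
  assumes "k < N" and "j < N" and "j \<noteq> k"
    and pair: "\<forall>i<N. M i k + M k i = (if i = j then 1 else 0)"
    and "odd (a j)" and "even (bilin N M a a)"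
    and "\<forall>i<N. i \<noteq> k \<longrightarrow> [y i = a i] (mod 2)" and "y k = 0"
  shows "odd (bilin N M y y) \<longleftrightarrow> odd (a k)"
proof -
  have "[bilin N M y y = bilin N M (a(k := 0)) (a(k := 0))] (mod 2)"
    by (rule bilin_cong) (use assms in auto)
  moreover have "bilin N M a a = a k * a j + bilin N M (a(k := 0)) (a(k := 0))"
    using bilin_update_hyperbolic[OF \<open>k < N\<close> \<open>j < N\<close> \<open>j \<noteq> k\<close> pair, of a "a k"] by simp
  ultimately show ?thesis
    using \<open>odd (a j)\<close> \<open>even (bilin N M a a)\<close> by (auto simp: cong_iff_dvd_diff)
qed

lemma bilin_supported:
  assumes "S \<subseteq> {..<N}" and "\<forall>i<N. i \<notin> S \<longrightarrow> x i = 0"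
  shows "bilin N M x x = (\<Sum>i\<in>S. \<Sum>j\<in>S. x i * M i j * x j)"
proof -
  have "(\<Sum>j<N. x i * M i j * x j) = (\<Sum>j\<in>S. x i * M i j * x j)" for i
    using assms by (intro sum.mono_neutral_right) auto
  then have "bilin N M x x = (\<Sum>i<N. \<Sum>j\<in>S. x i * M i j * x j)"
    by (simp add: bilin_def)
  also have "\<dots> = (\<Sum>i\<in>S. \<Sum>j\<in>S. x i * M i j * x j)"
    using assms by (intro sum.mono_neutral_right) auto
  finally show ?thesis .
qed

section \<open>Projective classes\<close>

lemma one_in_units_mod: "q > 1 \<Longrightarrow> 1 \<in> units_mod q"
  by (simp add: units_mod_def)

lemma units_mod_mult: "c \<in> units_mod q \<Longrightarrow> e \<in> units_mod q \<Longrightarrow> c * e mod q \<in> units_mod q"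
  unfolding units_mod_def by auto

lemma units_mod_inverse:
  assumes "c \<in> units_mod q" and "q > 1"
  obtains d where "d \<in> units_mod q" and "d * c mod q = 1"
proof -
  from assms have "coprime c q" by (simp add: units_mod_def)
  then obtain x where x: "[c * x = 1] (mod q)" using cong_solve_coprime_int by blast
  then have "coprime x q"
    using cong_imp_coprime[OF cong_sym[OF x]] by simp
  moreover have "x mod q * c mod q = 1"
    using x \<open>q > 1\<close> by (simp add: cong_def mod_mult_right_eq mult.commute)
  ultimately show ?thesis
    using \<open>q > 1\<close> that[of "x mod q"] by (simp add: units_mod_def)
qed

lemma smult_mod: "smult q (c mod q) x = smult q c x"
  unfolding smult_def by (simp add: mod_mult_left_eq)

lemma smult_smult: "smult q c (smult q d a) = smult q (c * d) a"
  unfolding smult_def by (simp add: mod_mult_right_eq mult.assoc)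

lemma smult_one:
  assumes "a \<in> vecs q N"
  shows "smult q 1 a = a"
proof
  fix i
  show "smult q 1 a i = a i"
    using assms by (cases "i < N") (simp_all add: smult_def vecs_def)
qed

lemma smult_in_Vset:
  assumes "a \<in> Vset q N" and "c \<in> units_mod q" and "q > 1"
  shows "smult q c a \<in> Vset q N"
proof -
  from assms(1) obtain i where "i < N" "coprime (a i) q" by (auto simp: Vset_def)
  moreover have "coprime (smult q c a i) q"
    using \<open>coprime (a i) q\<close> assms(2) by (simp add: smult_def units_mod_def)
  moreover have "smult q c a \<in> vecs q N"
    using assms by (auto simp: vecs_def Vset_def smult_def)
  ultimately show ?thesis unfolding Vset_def by auto
qed

lemma self_in_cls: "a \<in> Vset q N \<Longrightarrow> q > 1 \<Longrightarrow> a \<in> cls q N a"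
  unfolding cls_def using smult_one[of a q N] one_in_units_mod[of q]
  by (auto simp: Vset_def intro!: bexI[of _ 1])

lemma cls_sym:
  assumes "b \<in> cls q N a" and "q > 1"
  shows "a \<in> cls q N b"
proof -
  from assms obtain c where b: "b \<in> Vset q N" and c: "c \<in> units_mod q" "a = smult q c b"
    by (auto simp: cls_def)
  obtain d where d: "d \<in> units_mod q" "d * c mod q = 1"
    using units_mod_inverse[OF c(1) \<open>q > 1\<close>] by blast
  have "smult q d a = smult q (d * c mod q) b"
    using c(2) by (simp add: smult_smult smult_mod)
  then have "b = smult q d a"
    using d(2) b smult_one[of b q N] by (simp add: Vset_def)
  moreover have "a \<in> Vset q N"
    using smult_in_Vset[OF b c(1) \<open>q > 1\<close>] c(2) by simp
  ultimately show ?thesis using d(1) by (auto simp: cls_def)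
qed

lemma cls_subset:
  assumes "b \<in> cls q N a"
  shows "cls q N b \<subseteq> cls q N a"
proof
  fix x assume "x \<in> cls q N b"
  then obtain e where e: "e \<in> units_mod q" "b = smult q e x" "x \<in> Vset q N"
    by (auto simp: cls_def)
  from assms obtain c where c: "c \<in> units_mod q" "a = smult q c b"
    by (auto simp: cls_def)
  have "a = smult q (c * e mod q) x"
    using c e by (simp add: smult_mod smult_smult)
  then show "x \<in> cls q N a"
    using e units_mod_mult[OF c(1) e(1)] by (auto simp: cls_def)
qed

lemma cls_eq: "b \<in> cls q N a \<Longrightarrow> q > 1 \<Longrightarrow> cls q N b = cls q N a"
  using cls_subset[of b q N a] cls_subset[OF cls_sym, of b q N a] by blast

lemma cls_in_verts_iff:
  assumes "q > 1"
  shows "cls q N a \<in> verts q N G \<longleftrightarrow> a \<in> Vset q N \<and> bilin N G a a mod q = 0"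
proof
  assume "cls q N a \<in> verts q N G"
  then obtain x where x: "x \<in> Vset q N" "form q N G x x = 0" "cls q N a = cls q N x"
    by (auto simp: verts_def)
  then have "x \<in> cls q N a"
    using self_in_cls[OF x(1) \<open>q > 1\<close>] by simp
  then obtain c where "a = smult q c x"
    by (auto simp: cls_def)
  then have "bilin N G a a mod q = c * c * (bilin N G x x mod q) mod q"
    by (simp add: bilin_smult mod_mult_right_eq)
  moreover have "a \<in> Vset q N"
    using cls_sym[OF \<open>x \<in> cls q N a\<close> \<open>q > 1\<close>] by (simp add: cls_def)
  ultimately show "a \<in> Vset q N \<and> bilin N G a a mod q = 0"
    using x(2) by (simp add: form_eq_bilin_mod)
next
  assume "a \<in> Vset q N \<and> bilin N G a a mod q = 0"
  then show "cls q N a \<in> verts q N G"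
    unfolding verts_def form_eq_bilin_mod by (auto intro!: exI[of _ a])
qed

lemma verts_eq_cls: "B \<in> verts q N G \<Longrightarrow> b \<in> B \<Longrightarrow> q > 1 \<Longrightarrow> B = cls q N b"
  unfolding verts_def using cls_eq[where b = b and q = q and N = N] by auto

lemma units_mod_2: "units_mod 2 = {1}"
  unfolding units_mod_def by (rule set_eqI) (simp, presburger)

lemma cls_2: "x \<in> Vset 2 N \<Longrightarrow> cls 2 N x = {x}"
  using smult_one[of _ 2 N] unfolding cls_def units_mod_2 Vset_def by auto

section \<open>Reduction modulo 2\<close>

lemma pow2_gt_1: "n \<ge> 1 \<Longrightarrow> (2::int) ^ n > 1"
  by (rule one_less_power) auto

lemma mod_pow2_mod_2: "n \<ge> 1 \<Longrightarrow> (x::int) mod 2 ^ n mod 2 = x mod 2"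
  by (rule mod_mod_cancel) (simp add: dvd_power)

lemma odd_mod_pow2_iff: "n \<ge> 1 \<Longrightarrow> odd ((x::int) mod 2 ^ n) \<longleftrightarrow> odd x"
  using mod_pow2_mod_2[of n x] by (simp add: odd_iff_mod_2_eq_one)

lemma units_mod_pow2_odd: "n \<ge> 1 \<Longrightarrow> c \<in> units_mod (2 ^ n) \<Longrightarrow> odd c"
  by (simp add: units_mod_def)

lemma bilin_pi2: "[bilin N M (pi2 a) (pi2 b) = bilin N M a b] (mod 2)"
  by (rule bilin_cong) (auto simp: pi2_def cong_def)

lemma pi2_in_Vset_iff:
  assumes "n \<ge> 1" and "a \<in> vecs (2 ^ n) N"
  shows "pi2 a \<in> Vset 2 N \<longleftrightarrow> a \<in> Vset (2 ^ n) N"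
  using assms by (auto simp: Vset_def vecs_def pi2_def)

lemma pi2_smult: "n \<ge> 1 \<Longrightarrow> odd c \<Longrightarrow> pi2 (smult (2 ^ n) c x) = pi2 x"
  unfolding pi2_def smult_def
  by (rule ext) (metis mod_pow2_mod_2 mod_mult_left_eq odd_iff_mod_2_eq_one mult_1)

lemma pi2_vadd_evens:
  assumes "n \<ge> 1" and "a \<in> vecs (2 ^ n) N" and "m \<in> evens (2 ^ n) N"
  shows "pi2 (vadd (2 ^ n) a m) = pi2 a"
proof
  fix i
  show "pi2 (vadd (2 ^ n) a m) i = pi2 a i"
  proof (cases "i < N")
    case True
    then have "even (m i)" using assms(3) by (auto simp: evens_def)
    then show ?thesis using mod_pow2_mod_2[OF assms(1)] by (auto simp: pi2_def vadd_def)
  next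
    case False
    then show ?thesis using assms(2,3) by (simp add: pi2_def vadd_def vecs_def evens_def)
  qed
qed

lemma vadd_in_vecs: "q > 0 \<Longrightarrow> a \<in> vecs q N \<Longrightarrow> m \<in> evens q N \<Longrightarrow> vadd q a m \<in> vecs q N"
  by (auto simp: vecs_def evens_def vadd_def)

lemma cls_pi2_in_verts:
  assumes "n \<ge> 1" and "cls (2 ^ n) N a \<in> verts (2 ^ n) N G"
  shows "cls 2 N (pi2 a) \<in> verts 2 N G"
proof -
  have a: "a \<in> Vset (2 ^ n) N" "bilin N G a a mod 2 ^ n = 0"
    using assms cls_in_verts_iff[OF pow2_gt_1] by blast+
  then have "pi2 a \<in> Vset 2 N"
    using pi2_in_Vset_iff[OF \<open>n \<ge> 1\<close>] by (auto simp: Vset_def)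
  moreover have "bilin N G (pi2 a) (pi2 a) mod 2 = 0"
    using bilin_pi2[of N G a a] mod_pow2_mod_2[OF \<open>n \<ge> 1\<close>, of "bilin N G a a"] a(2)
    by (simp add: cong_def)
  ultimately show ?thesis by (simp add: cls_in_verts_iff)
qed

lemma adjacent_pow2_iff:
  assumes "n \<ge> 1"
    and a: "cls (2 ^ n) N a \<in> verts (2 ^ n) N G" and b: "cls (2 ^ n) N b \<in> verts (2 ^ n) N G"
  shows "adjacent (2 ^ n) N G (cls (2 ^ n) N a) (cls (2 ^ n) N b) \<longleftrightarrow>
    odd (bilin N (\<lambda>i j. G i j + G j i) a b)"
proof -
  let ?q = "(2::int) ^ n" and ?S = "\<lambda>i j. G i j + G j i"
  have odd_iff: "coprime (form ?q N ?S x y) ?q \<longleftrightarrow> odd (bilin N ?S x y)" for x y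
    using \<open>n \<ge> 1\<close> by (simp add: form_eq_bilin_mod odd_mod_pow2_iff)
  show ?thesis
  proof
    assume "adjacent ?q N G (cls ?q N a) (cls ?q N b)"
    then obtain a' b' where "a' \<in> cls ?q N a" "b' \<in> cls ?q N b" and "odd (bilin N ?S a' b')"
      unfolding adjacent_def odd_iff by blast
    moreover obtain c d where "c \<in> units_mod ?q" "a = smult ?q c a'" "d \<in> units_mod ?q" "b = smult ?q d b'"
      using \<open>a' \<in> cls ?q N a\<close> \<open>b' \<in> cls ?q N b\<close> by (auto simp: cls_def)
    ultimately have "odd (bilin N ?S a b mod ?q)"
      using \<open>n \<ge> 1\<close> by (simp add: bilin_smult odd_mod_pow2_iff units_mod_pow2_odd)
    then show "odd (bilin N ?S a b)"
      using odd_mod_pow2_iff[OF \<open>n \<ge> 1\<close>] by blast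
  next
    assume "odd (bilin N ?S a b)"
    moreover have "a \<in> cls ?q N a" "b \<in> cls ?q N b"
      using a b cls_in_verts_iff self_in_cls pow2_gt_1[OF \<open>n \<ge> 1\<close>] by blast+
    ultimately show "adjacent ?q N G (cls ?q N a) (cls ?q N b)"
      using a b unfolding adjacent_def odd_iff by blast
  qed
qed

lemma adjacent_2_pi2_iff:
  "adjacent 2 N G (cls 2 N (pi2 a)) (cls 2 N (pi2 b)) \<longleftrightarrow>
    cls 2 N (pi2 a) \<in> verts 2 N G \<and> cls 2 N (pi2 b) \<in> verts 2 N G \<and>
    odd (bilin N (\<lambda>i j. G i j + G j i) a b)"
proof (cases "cls 2 N (pi2 a) \<in> verts 2 N G \<and> cls 2 N (pi2 b) \<in> verts 2 N G")
  case True
  have "odd (bilin N (\<lambda>i j. G i j + G j i) (pi2 a) (pi2 b)) \<longleftrightarrow> odd (bilin N (\<lambda>i j. G i j + G j i) a b)"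
    using bilin_pi2[of N "\<lambda>i j. G i j + G j i" a b] by (simp add: cong_def odd_iff_mod_2_eq_one)
  then show ?thesis
    using True adjacent_pow2_iff[of 1 N "pi2 a" G "pi2 b"] by simp
qed (auto simp: adjacent_def)

lemma adjacent_iff_adjacent_mod2:
  assumes "n \<ge> 1"
    and a: "cls (2 ^ n) N a \<in> verts (2 ^ n) N G" and b: "cls (2 ^ n) N b \<in> verts (2 ^ n) N G"
  shows "adjacent (2 ^ n) N G (cls (2 ^ n) N a) (cls (2 ^ n) N b) \<longleftrightarrow>
    adjacent 2 N G (cls 2 N (pi2 a)) (cls 2 N (pi2 b))"
  using adjacent_pow2_iff[OF assms] adjacent_2_pi2_iff cls_pi2_in_verts[OF \<open>n \<ge> 1\<close>] a b
  by blast

lemma adjacent_lift: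
  assumes "n \<ge> 1" and "a \<in> vecs (2 ^ n) N" and "b \<in> vecs (2 ^ n) N"
    and adj: "adjacent 2 N G (cls 2 N (pi2 a)) (cls 2 N (pi2 b))"
    and "m1 \<in> evens (2 ^ n) N" and "m2 \<in> evens (2 ^ n) N"
    and zero1: "form (2 ^ n) N G (vadd (2 ^ n) a m1) (vadd (2 ^ n) a m1) = 0"
    and zero2: "form (2 ^ n) N G (vadd (2 ^ n) b m2) (vadd (2 ^ n) b m2) = 0"
  shows "adjacent (2 ^ n) N G (cls (2 ^ n) N (vadd (2 ^ n) a m1)) (cls (2 ^ n) N (vadd (2 ^ n) b m2))"
proof -
  define a' b' where "a' = vadd (2 ^ n) a m1" and "b' = vadd (2 ^ n) b m2"
  have pi2_eq: "pi2 a' = pi2 a" "pi2 b' = pi2 b"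
    using pi2_vadd_evens assms unfolding a'_def b'_def by blast+
  have "a' \<in> vecs (2 ^ n) N" "b' \<in> vecs (2 ^ n) N"
    using vadd_in_vecs assms unfolding a'_def b'_def by auto
  moreover have "pi2 a \<in> Vset 2 N" "pi2 b \<in> Vset 2 N"
    using adj by (auto simp: adjacent_def cls_in_verts_iff)
  ultimately have "a' \<in> Vset (2 ^ n) N" "b' \<in> Vset (2 ^ n) N"
    using pi2_in_Vset_iff[OF \<open>n \<ge> 1\<close>] pi2_eq by metis+
  then have verts: "cls (2 ^ n) N a' \<in> verts (2 ^ n) N G" "cls (2 ^ n) N b' \<in> verts (2 ^ n) N G"
    using zero1 zero2 pow2_gt_1[OF \<open>n \<ge> 1\<close>]
    by (simp_all add: a'_def b'_def cls_in_verts_iff form_eq_bilin_mod)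
  then show ?thesis
    using adjacent_iff_adjacent_mod2[OF \<open>n \<ge> 1\<close> verts] adj pi2_eq
    unfolding a'_def b'_def by simp
qed

section \<open>Counting the lifts of a vertex\<close>

lemma card_residues_mod_2:
  assumes "n \<ge> 1" and "r \<in> {0, 1}"
  shows "card {t::int. 0 \<le> t \<and> t < 2 ^ n \<and> t mod 2 = r} = 2 ^ (n - 1)"
proof -
  have pow: "(2::int) ^ n = 2 * 2 ^ (n - 1)"
    using \<open>n \<ge> 1\<close> by (simp add: power_eq_if)
  have "{t::int. 0 \<le> t \<and> t < 2 ^ n \<and> t mod 2 = r} = (\<lambda>s. 2 * s + r) ` {0..<2 ^ (n - 1)}"
  proof (intro equalityI subsetI)
    fix t assume "t \<in> {t::int. 0 \<le> t \<and> t < 2 ^ n \<and> t mod 2 = r}"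
    then have "t = 2 * (t div 2) + r" "t div 2 \<in> {0..<2 ^ (n - 1)}"
      unfolding pow by auto
    then show "t \<in> (\<lambda>s. 2 * s + r) ` {0..<2 ^ (n - 1)}" by blast
  qed (use assms(2) pow in auto)
  moreover have "inj_on (\<lambda>s::int. 2 * s + r) {0..<2 ^ (n - 1)}"
    by (rule inj_onI) simp
  ultimately show ?thesis
    by (simp add: card_image nat_power_eq)
qed

lemma card_vecs_prescribed_parity:
  assumes "n \<ge> 1" and "D \<subseteq> {..<N}" and r: "\<forall>i\<in>D. r i \<in> {0, 1}"
    and c: "\<forall>i\<in>{..<N} - D. 0 \<le> c i \<and> c i < 2 ^ n"
  shows "card {y \<in> vecs (2 ^ n) N. (\<forall>i\<in>D. y i mod 2 = r i) \<and> (\<forall>i\<in>{..<N} - D. y i = c i)}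
    = 2 ^ ((n - 1) * card D)"
proof -
  let ?Y = "{y \<in> vecs (2 ^ n) N. (\<forall>i\<in>D. y i mod 2 = r i) \<and> (\<forall>i\<in>{..<N} - D. y i = c i)}"
  define R where "R i = {t::int. 0 \<le> t \<and> t < 2 ^ n \<and> t mod 2 = r i}" for i
  define extend where "extend f i = (if i \<in> D then f i else if i < N then c i else 0)" for f :: "nat \<Rightarrow> int" and i
  have "bij_betw (\<lambda>y. restrict y D) ?Y (PiE D R)"
  proof (rule bij_betw_byWitness[where f' = extend])
    show "\<forall>y\<in>?Y. extend (restrict y D) = y"
      using \<open>D \<subseteq> {..<N}\<close> by (auto simp: extend_def vecs_def)
    show "\<forall>f\<in>PiE D R. restrict (extend f) D = f"
      by (auto simp: extend_def PiE_def extensional_def)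
    show "(\<lambda>y. restrict y D) ` ?Y \<subseteq> PiE D R"
      using \<open>D \<subseteq> {..<N}\<close> by (auto simp: R_def vecs_def)
    show "extend ` PiE D R \<subseteq> ?Y"
      using \<open>D \<subseteq> {..<N}\<close> c by (fastforce simp: extend_def R_def vecs_def PiE_def)
  qed
  then have "card ?Y = card (PiE D R)"
    by (rule bij_betw_same_card)
  also have "\<dots> = (\<Prod>i\<in>D. card (R i))"
    using \<open>D \<subseteq> {..<N}\<close> finite_subset by (blast intro: card_PiE)
  also have "\<dots> = (2 ^ (n - 1)) ^ card D"
    using r card_residues_mod_2[OF \<open>n \<ge> 1\<close>] by (simp add: R_def)
  finally show ?thesis
    by (simp add: power_mult)
qed

lemma bij_betw_clear_hyperbolic_coord:
  assumes "n \<ge> 1" and "a \<in> vecs (2 ^ n) N" and "j < N" and "k < N" and "j \<noteq> k"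
    and "odd (a j)" and "even (bilin N M a a)"
    and pair: "\<forall>i<N. M i k + M k i = (if i = j then 1 else 0)"
  shows "bij_betw (\<lambda>x. x(k := 0))
    {x \<in> vecs (2 ^ n) N. pi2 x = pi2 a \<and> x j = 1 \<and> bilin N M x x mod 2 ^ n = 0}
    {y \<in> vecs (2 ^ n) N. (\<forall>i\<in>{..<N} - {j, k}. y i mod 2 = a i mod 2) \<and> y j = 1 \<and> y k = 0}"
    (is "bij_betw _ ?T ?U")
proof -
  let ?q = "(2::int) ^ n"
  have q: "?q > 1" using pow2_gt_1[OF \<open>n \<ge> 1\<close>] .
  have zero_iff: "bilin N M x x mod ?q = 0 \<longleftrightarrow> x k = - bilin N M (x(k := 0)) (x(k := 0)) mod ?q"
    if "x j = 1" and "0 \<le> x k" and "x k < ?q" for x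
    using bilin_zero_mod_iff_hyperbolic_coord[OF \<open>k < N\<close> \<open>j < N\<close> \<open>j \<noteq> k\<close> pair that] .
  define solve where "solve y = y(k := - bilin N M y y mod ?q)" for y
  have solve_parity: "odd (solve y k) \<longleftrightarrow> odd (a k)" if "y \<in> ?U" for y
  proof -
    have "\<forall>i<N. i \<noteq> k \<longrightarrow> [y i = a i] (mod 2)"
      using that \<open>odd (a j)\<close> by (auto simp: cong_def odd_iff_mod_2_eq_one)
    then show ?thesis
      using odd_bilin_clear_hyperbolic_coord[OF \<open>k < N\<close> \<open>j < N\<close> \<open>j \<noteq> k\<close> pair \<open>odd (a j)\<close>
          \<open>even (bilin N M a a)\<close>] that odd_mod_pow2_iff[OF \<open>n \<ge> 1\<close>]
      by (simp add: solve_def)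
  qed
  show ?thesis
  proof (rule bij_betw_byWitness[where f' = solve])
    show "\<forall>x\<in>?T. solve (x(k := 0)) = x"
    proof
      fix x assume x: "x \<in> ?T"
      then have "x k = - bilin N M (x(k := 0)) (x(k := 0)) mod ?q"
        using zero_iff[of x] \<open>k < N\<close> by (simp add: vecs_def)
      then show "solve (x(k := 0)) = x"
        unfolding solve_def by (metis fun_upd_triv fun_upd_upd)
    qed
    show "\<forall>y\<in>?U. (solve y)(k := 0) = y"
      by (simp add: solve_def fun_upd_idem)
    show "(\<lambda>x. x(k := 0)) ` ?T \<subseteq> ?U"
    proof (rule image_subsetI)
      fix x assume x: "x \<in> ?T"
      then have "x i mod 2 = a i mod 2" for i
        by (simp add: pi2_def fun_eq_iff)
      then show "x(k := 0) \<in> ?U"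
        using x \<open>k < N\<close> \<open>j \<noteq> k\<close> by (auto simp: vecs_def)
    qed
    show "solve ` ?U \<subseteq> ?T"
    proof (rule image_subsetI)
      fix y assume y: "y \<in> ?U"
      have "solve y \<in> vecs ?q N"
        using y q \<open>k < N\<close> by (auto simp: solve_def vecs_def)
      moreover have "solve y i mod 2 = a i mod 2" for i
      proof (cases "i = k")
        case True
        then show ?thesis
          using solve_parity[OF y] by (metis odd_iff_mod_2_eq_one even_iff_mod_2_eq_zero)
      next
        case False
        then have "solve y i = y i" by (simp add: solve_def)
        moreover have "y i mod 2 = a i mod 2"
          using y \<open>i \<noteq> k\<close> \<open>odd (a j)\<close> \<open>a \<in> vecs ?q N\<close>
          by (cases "i < N") (auto simp: vecs_def odd_iff_mod_2_eq_one)
        ultimately show ?thesis by simp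
      qed
      moreover have "bilin N M (solve y) (solve y) mod ?q = 0"
        using zero_iff[of "solve y"] y q \<open>j \<noteq> k\<close> by (simp add: solve_def fun_upd_idem)
      ultimately show "solve y \<in> ?T"
        using y \<open>j \<noteq> k\<close> by (simp add: solve_def pi2_def)
    qed
  qed
qed

lemma card_normalized_lifts:
  assumes "n \<ge> 1" and "a \<in> vecs (2 ^ n) N" and "j < N" and "k < N" and "j \<noteq> k"
    and "odd (a j)" and "even (bilin N M a a)"
    and "\<forall>i<N. M i k + M k i = (if i = j then 1 else 0)"
  shows "card {x \<in> vecs (2 ^ n) N. pi2 x = pi2 a \<and> x j = 1 \<and> bilin N M x x mod 2 ^ n = 0}
    = 2 ^ ((n - 1) * (N - 2))"
proof -
  let ?D = "{..<N} - {j, k}"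
  have fixed: "{..<N} - ?D = {j, k}"
    using \<open>j < N\<close> \<open>k < N\<close> by auto
  have "card {x \<in> vecs (2 ^ n) N. pi2 x = pi2 a \<and> x j = 1 \<and> bilin N M x x mod 2 ^ n = 0}
    = card {y \<in> vecs (2 ^ n) N. (\<forall>i\<in>?D. y i mod 2 = a i mod 2) \<and> y j = 1 \<and> y k = 0}"
    using bij_betw_clear_hyperbolic_coord[OF assms] by (rule bij_betw_same_card)
  also have "\<dots> = card {y \<in> vecs (2 ^ n) N. (\<forall>i\<in>?D. y i mod 2 = a i mod 2) \<and>
      (\<forall>i\<in>{..<N} - ?D. y i = (if i = j then 1 else 0))}"
  proof -
    have "(\<forall>i\<in>{j, k}. y i = (if i = j then 1 else 0)) \<longleftrightarrow> y j = 1 \<and> y k = 0" for y :: "nat \<Rightarrow> int"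
      using \<open>j \<noteq> k\<close> by auto
    then show ?thesis unfolding fixed by simp
  qed
  also have "\<dots> = 2 ^ ((n - 1) * card ?D)"
    using pow2_gt_1[OF \<open>n \<ge> 1\<close>]
    by (intro card_vecs_prescribed_parity \<open>n \<ge> 1\<close>) (auto simp: fixed)
  also have "card ?D = N - 2"
    using \<open>j < N\<close> \<open>k < N\<close> \<open>j \<noteq> k\<close> by (subst card_Diff_subset) auto
  finally show ?thesis .
qed

lemma card_cls_image_normalized:
  assumes "q > 1" and "j < N" and "S \<subseteq> Vset q N"
    and closed: "\<forall>x\<in>S. \<forall>c\<in>units_mod q. smult q c x \<in> S"
    and unit: "\<forall>x\<in>S. coprime (x j) q"
  shows "card (cls q N ` S) = card {x \<in> S. x j = 1}"
proof -
  have "cls q N ` S \<subseteq> cls q N ` {x \<in> S. x j = 1}"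
  proof (rule image_subsetI)
    fix x assume "x \<in> S"
    then have "x j \<in> units_mod q"
      using unit \<open>S \<subseteq> Vset q N\<close> \<open>j < N\<close> by (auto simp: units_mod_def Vset_def vecs_def)
    then obtain d where d: "d \<in> units_mod q" "d * x j mod q = 1"
      using units_mod_inverse \<open>q > 1\<close> by blast
    have "smult q d x \<in> {x \<in> S. x j = 1}"
      using closed \<open>x \<in> S\<close> d by (simp add: smult_def)
    moreover have "x \<in> cls q N (smult q d x)"
      using \<open>x \<in> S\<close> \<open>S \<subseteq> Vset q N\<close> d(1) by (auto simp: cls_def)
    ultimately show "cls q N x \<in> cls q N ` {x \<in> S. x j = 1}"
      using cls_eq[OF _ \<open>q > 1\<close>] by (intro image_eqI) auto
  qed
  then have "cls q N ` S = cls q N ` {x \<in> S. x j = 1}"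
    by auto
  moreover have "inj_on (cls q N) {x \<in> S. x j = 1}"
  proof (rule inj_onI)
    fix x y assume x: "x \<in> {x \<in> S. x j = 1}" and y: "y \<in> {x \<in> S. x j = 1}"
      and "cls q N x = cls q N y"
    moreover have "x \<in> cls q N x"
      using x \<open>S \<subseteq> Vset q N\<close> self_in_cls[OF _ \<open>q > 1\<close>] by auto
    ultimately have "x \<in> cls q N y"
      by simp
    then obtain c where c: "c \<in> units_mod q" "y = smult q c x"
      by (auto simp: cls_def)
    then have "c = 1"
      using x y by (auto simp: smult_def units_mod_def)
    then show "x = y"
      using c x \<open>S \<subseteq> Vset q N\<close> smult_one by (auto simp: Vset_def)
  qed
  ultimately show ?thesis
    by (simp add: card_image)
qed

lemma verts_over_mod2_vertex:
  assumes "n \<ge> 1" and "cls 2 N (pi2 a) \<in> verts 2 N G"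
  shows "{B \<in> verts (2 ^ n) N G. \<exists>b\<in>B. cls 2 N (pi2 a) = cls 2 N (pi2 b)} =
    cls (2 ^ n) N ` {x \<in> Vset (2 ^ n) N. bilin N G x x mod 2 ^ n = 0 \<and> pi2 x = pi2 a}"
    (is "?L = cls (2 ^ n) N ` ?S")
proof (intro equalityI subsetI)
  have q: "(2::int) ^ n > 1" using pow2_gt_1[OF \<open>n \<ge> 1\<close>] .
  fix B assume "B \<in> ?L"
  then obtain b where B: "B \<in> verts (2 ^ n) N G" and "b \<in> B"
    and same: "cls 2 N (pi2 a) = cls 2 N (pi2 b)"
    by auto
  then have B_eq: "B = cls (2 ^ n) N b"
    using verts_eq_cls[OF B \<open>b \<in> B\<close> q] by simp
  then have b: "b \<in> Vset (2 ^ n) N" "bilin N G b b mod 2 ^ n = 0"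
    using B cls_in_verts_iff[OF q] by auto
  then have "pi2 b \<in> Vset 2 N"
    using pi2_in_Vset_iff[OF \<open>n \<ge> 1\<close>] by (auto simp: Vset_def)
  moreover have "pi2 a \<in> Vset 2 N"
    using assms(2) by (simp add: cls_in_verts_iff)
  ultimately have "pi2 b = pi2 a"
    using same by (simp add: cls_2)
  then have "b \<in> ?S"
    using b by simp
  then show "B \<in> cls (2 ^ n) N ` ?S"
    unfolding B_eq by (rule imageI)
next
  have q: "(2::int) ^ n > 1" using pow2_gt_1[OF \<open>n \<ge> 1\<close>] .
  fix B assume "B \<in> cls (2 ^ n) N ` ?S"
  then obtain x where x: "x \<in> ?S" and B: "B = cls (2 ^ n) N x"
    by (rule imageE)
  then have "B \<in> verts (2 ^ n) N G" and "x \<in> B"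
    using cls_in_verts_iff[OF q] self_in_cls[OF _ q] by auto
  then show "B \<in> ?L"
    using x by (auto intro!: bexI[of _ x])
qed

lemma card_verts_over_mod2_vertex_eq_card_normalized:
  assumes "n \<ge> 1" and "j < N" and "odd (a j)" and "cls 2 N (pi2 a) \<in> verts 2 N G"
  shows "card {B \<in> verts (2 ^ n) N G. \<exists>b\<in>B. cls 2 N (pi2 a) = cls 2 N (pi2 b)}
    = card {x \<in> vecs (2 ^ n) N. pi2 x = pi2 a \<and> x j = 1 \<and> bilin N G x x mod 2 ^ n = 0}"
proof -
  let ?q = "(2::int) ^ n"
  define S where "S = {x \<in> Vset ?q N. bilin N G x x mod ?q = 0 \<and> pi2 x = pi2 a}"
  have q: "?q > 1" using pow2_gt_1[OF \<open>n \<ge> 1\<close>] .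
  have "card {B \<in> verts ?q N G. \<exists>b\<in>B. cls 2 N (pi2 a) = cls 2 N (pi2 b)} = card (cls ?q N ` S)"
    unfolding S_def using verts_over_mod2_vertex[OF \<open>n \<ge> 1\<close> \<open>cls 2 N (pi2 a) \<in> verts 2 N G\<close>] by simp
  also have "\<dots> = card {x \<in> S. x j = 1}"
  proof (rule card_cls_image_normalized[OF q \<open>j < N\<close>])
    show "S \<subseteq> Vset ?q N"
      by (auto simp: S_def)
    show "\<forall>x\<in>S. \<forall>c\<in>units_mod ?q. smult ?q c x \<in> S"
    proof (intro ballI)
      fix x c assume x: "x \<in> S" and c: "c \<in> units_mod ?q"
      have "bilin N G (smult ?q c x) (smult ?q c x) mod ?q = c * c * (bilin N G x x mod ?q) mod ?q"
        by (simp add: bilin_smult mod_mult_right_eq)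
      then show "smult ?q c x \<in> S"
        using x c smult_in_Vset[OF _ c q] pi2_smult[OF \<open>n \<ge> 1\<close> units_mod_pow2_odd[OF \<open>n \<ge> 1\<close> c]]
        by (simp add: S_def)
    qed
    show "\<forall>x\<in>S. coprime (x j) ?q"
      using \<open>odd (a j)\<close> \<open>n \<ge> 1\<close> by (auto simp: S_def pi2_def fun_eq_iff odd_iff_mod_2_eq_one)
  qed
  also have "{x \<in> S. x j = 1} = {x \<in> vecs ?q N. pi2 x = pi2 a \<and> x j = 1 \<and> bilin N G x x mod ?q = 0}"
  proof -
    have "x \<in> Vset ?q N \<longleftrightarrow> x \<in> vecs ?q N" if "x j = 1" for x
      using that \<open>j < N\<close> by (auto simp: Vset_def intro!: exI[of _ j])
    then show ?thesis by (auto simp: S_def)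
  qed
  finally show ?thesis .
qed

section \<open>The matrix G\<close>

definition hyperbolic_partner :: "nat \<Rightarrow> nat \<Rightarrow> nat" where
  "hyperbolic_partner nu k = (if k < nu then nu + k else k - nu)"

lemma hyperbolic_partner:
  assumes "k < 2 * nu"
  shows "hyperbolic_partner nu k < 2 * nu" and "hyperbolic_partner nu k \<noteq> k"
    and "hyperbolic_partner nu (hyperbolic_partner nu k) = k"
  using assms by (auto simp: hyperbolic_partner_def)

lemma Gmat_hyperbolic_pair:
  assumes "k < 2 * nu"
  shows "Gmat nu delta z i k + Gmat nu delta z k i = (if i = hyperbolic_partner nu k then 1 else 0)"
  using assms by (auto simp: Gmat_def hyperbolic_partner_def)

lemma odd_bilin_Gmat_anisotropic:
  assumes "delta \<in> {0, 1, 2}" and N: "N = 2 * nu + delta" and "odd z"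
    and zero: "\<forall>i<2 * nu. x i = 0" and "\<exists>i<N. odd (x i)"
  shows "odd (bilin N (Gmat nu delta z) x x)"
proof -
  define p where "p = 2 * nu"
  obtain i where "i < N" "odd (x i)"
    using \<open>\<exists>i<N. odd (x i)\<close> by blast
  moreover have "p \<le> i"
    using \<open>odd (x i)\<close> zero p_def by (cases "i < p") auto
  ultimately have i: "i < N" "odd (x i)" "p \<le> i" by blast+
  consider "delta = 0" | "delta = 1" | "delta = 2"
    using \<open>delta \<in> {0, 1, 2}\<close> by blast
  then show ?thesis
  proof cases
    case 1
    then show ?thesis using i N p_def by simp
  next
    case 2
    have "bilin N (Gmat nu delta z) x x = (\<Sum>i\<in>{p}. \<Sum>j\<in>{p}. x i * Gmat nu delta z i j * x j)"
      using 2 N zero by (intro bilin_supported) (auto simp: p_def)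
    moreover have "i = p"
      using i 2 N p_def by simp
    ultimately show ?thesis
      using i 2 by (simp add: Gmat_def p_def)
  next
    case 3
    have "bilin N (Gmat nu delta z) x x = (\<Sum>i\<in>{p, p + 1}. \<Sum>j\<in>{p, p + 1}. x i * Gmat nu delta z i j * x j)"
      using 3 N zero by (intro bilin_supported) (auto simp: p_def)
    also have "\<dots> = z * x p * x p + x p * x (p + 1) + z * x (p + 1) * x (p + 1)"
      using 3 by (simp add: Gmat_def p_def algebra_simps)
    moreover have "i = p \<or> i = p + 1"
      using i 3 N p_def by auto
    ultimately show ?thesis
      using i(2) \<open>odd z\<close> by auto
  qed
qed

lemma exists_odd_hyperbolic_coord:
  assumes "delta \<in> {0, 1, 2}" and N: "N = 2 * nu + delta" and "odd z"
    and "\<exists>i<N. odd (a i)" and even: "even (bilin N (Gmat nu delta z) a a)"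
  shows "\<exists>j<2 * nu. odd (a j)"
proof (rule ccontr)
  assume hyp_even: "\<not> (\<exists>j<2 * nu. odd (a j))"
  define a' where "a' i = (if i < 2 * nu then 0 else a i)" for i
  have "[bilin N (Gmat nu delta z) a' a' = bilin N (Gmat nu delta z) a a] (mod 2)"
    using hyp_even by (intro bilin_cong) (auto simp: a'_def cong_def even_iff_mod_2_eq_zero)
  moreover have "odd (bilin N (Gmat nu delta z) a' a')"
    using hyp_even \<open>\<exists>i<N. odd (a i)\<close>
    by (intro odd_bilin_Gmat_anisotropic[OF \<open>delta \<in> {0, 1, 2}\<close> N \<open>odd z\<close>]) (auto simp: a'_def)
  ultimately show False
    using even by (simp add: cong_def even_iff_mod_2_eq_zero odd_iff_mod_2_eq_one)
qed

lemma card_verts_over_mod2_vertex: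
  assumes "n \<ge> 1" and "delta \<in> {0, 1, 2}" and "odd z" and N: "N = 2 * nu + delta"
    and "a \<in> vecs (2 ^ n) N" and a: "cls (2 ^ n) N a \<in> verts (2 ^ n) N (Gmat nu delta z)"
  shows "card {B \<in> verts (2 ^ n) N (Gmat nu delta z). \<exists>b\<in>B. cls 2 N (pi2 a) = cls 2 N (pi2 b)}
    = 2 ^ ((n - 1) * (N - 2))"
proof -
  let ?G = "Gmat nu delta z"
  have aV: "a \<in> Vset (2 ^ n) N" and "bilin N ?G a a mod 2 ^ n = 0"
    using a cls_in_verts_iff[OF pow2_gt_1[OF \<open>n \<ge> 1\<close>]] by auto
  then have "even (bilin N ?G a a)"
    using mod_pow2_mod_2[OF \<open>n \<ge> 1\<close>, of "bilin N ?G a a"] by (simp add: even_iff_mod_2_eq_zero)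
  moreover have "\<exists>i<N. odd (a i)"
    using aV \<open>n \<ge> 1\<close> by (auto simp: Vset_def)
  ultimately obtain j where j: "j < 2 * nu" "odd (a j)"
    using exists_odd_hyperbolic_coord[OF \<open>delta \<in> {0, 1, 2}\<close> N \<open>odd z\<close>] by blast
  define k where "k = hyperbolic_partner nu j"
  have k: "k < 2 * nu" "k \<noteq> j" "hyperbolic_partner nu k = j"
    using hyperbolic_partner[OF \<open>j < 2 * nu\<close>] by (simp_all add: k_def)
  have pair: "\<forall>i<N. ?G i k + ?G k i = (if i = j then 1 else 0)"
    using Gmat_hyperbolic_pair[OF \<open>k < 2 * nu\<close>] k(3) by simp
  have "j < N" "k < N"
    using j k N by auto
  have "card {B \<in> verts (2 ^ n) N ?G. \<exists>b\<in>B. cls 2 N (pi2 a) = cls 2 N (pi2 b)}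
    = card {x \<in> vecs (2 ^ n) N. pi2 x = pi2 a \<and> x j = 1 \<and> bilin N ?G x x mod 2 ^ n = 0}"
    by (rule card_verts_over_mod2_vertex_eq_card_normalized)
      (use \<open>n \<ge> 1\<close> \<open>j < N\<close> \<open>odd (a j)\<close> cls_pi2_in_verts[OF \<open>n \<ge> 1\<close> a] in auto)
  also have "\<dots> = 2 ^ ((n - 1) * (N - 2))"
    by (rule card_normalized_lifts)
      (use \<open>n \<ge> 1\<close> \<open>a \<in> vecs (2 ^ n) N\<close> \<open>j < N\<close> \<open>k < N\<close> k(2) j(2)
        \<open>even (bilin N ?G a a)\<close> pair in auto)
  finally show ?thesis .
qed

theorem lemma2p2:
  fixes n nu delta :: nat and z :: int
  assumes "n \<ge> 1" and "nu \<ge> 1" and "delta \<in> {0, 1, 2}"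
    and "z \<in> units_mod (2 ^ n)"
  defines "N \<equiv> 2 * nu + delta" and "q \<equiv> (2::int) ^ n" and "G \<equiv> Gmat nu delta z"
  shows
   "(\<forall>a \<in> vecs q N. cls q N a \<in> verts q N G \<longrightarrow>
       card {B \<in> verts q N G. \<exists>b \<in> B. cls 2 N (pi2 a) = cls 2 N (pi2 b)}
         = 2 ^ ((n - 1) * (N - 2)))
    \<and> (\<forall>a \<in> vecs q N. \<forall>b \<in> vecs q N.
         cls q N a \<in> verts q N G \<longrightarrow> cls q N b \<in> verts q N G \<longrightarrow>
         (adjacent q N G (cls q N a) (cls q N b) \<longleftrightarrow>
          adjacent 2 N G (cls 2 N (pi2 a)) (cls 2 N (pi2 b))))
    \<and> (\<forall>a \<in> vecs q N. \<forall>b \<in> vecs q N.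
         adjacent 2 N G (cls 2 N (pi2 a)) (cls 2 N (pi2 b)) \<longrightarrow>
         (\<forall>m1 \<in> evens q N. \<forall>m2 \<in> evens q N.
            form q N G (vadd q a m1) (vadd q a m1) = 0 \<longrightarrow>
            form q N G (vadd q b m2) (vadd q b m2) = 0 \<longrightarrow>
            adjacent q N G (cls q N (vadd q a m1)) (cls q N (vadd q b m2))))"
proof -
  have "odd z" and N: "N = 2 * nu + delta"
    using assms(1,4) by (simp_all add: units_mod_def N_def)
  show ?thesis
    unfolding q_def G_def
  proof (intro conjI ballI impI)
    show "card {B \<in> verts (2 ^ n) N (Gmat nu delta z). \<exists>b\<in>B. cls 2 N (pi2 a) = cls 2 N (pi2 b)}
        = 2 ^ ((n - 1) * (N - 2))"
      if "a \<in> vecs (2 ^ n) N" and "cls (2 ^ n) N a \<in> verts (2 ^ n) N (Gmat nu delta z)" for a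
      using card_verts_over_mod2_vertex[OF \<open>n \<ge> 1\<close> \<open>delta \<in> {0, 1, 2}\<close> \<open>odd z\<close> N that] .
  qed (use adjacent_iff_adjacent_mod2[OF \<open>n \<ge> 1\<close>] adjacent_lift[OF \<open>n \<ge> 1\<close>] in \<open>simp_all\<close>)
qed

end
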